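(* Let $k\in\mathbb{N}$ and let $(E,d_E)$ be a properly $\mathsf{M}_k$-separated Bratteli diagram with $E^0=\bigsqcup_{n\ge1}V_n$, $V_n=H_n\sqcup\{y_n\}$, and $H=\bigsqcup_nH_n$. Let $G$ be the graph constructed from $(E,d_E)$ as follows. For $v\in H_n$ put $\delta(v)=d_E(v)-\sum_{e\in r_E^{-1}(v)}d_E(s_E(e))-1$, and $m(v)=|y_{n-1}E^*v|$ if $n\ge2$, $m(v)=0$ if $n=1$. Then $G^0=H\sqcup\{z_1,\dots,z_k\}\sqcup\{x_i^v: v\in H,1\le i\le\delta(v)\}$ and $G^1=\{e\in E^1: s_E(e)\in H\}\sqcup\{e_1,\dots,e_{k-1}\}\sqcup\{f_i^v: v\in H,1\le i\le m(v)\}\sqcup\{g_i^v: v\in H,1\le i\le\delta(v)\}$, where edges of $E$ keep their source and range, $e_i$ goes from $z_i$ to $z_k$, $f_i^v$ goes from $z_k$ to $v$, and $g_i^v$ goes from $x_i^v$ to $v$. Then for every $v\in H$, $d_E(v)=|\{\alpha\in G^*: r_G(\alpha)=v\}|$, where $G^*$ is the set of finite paths of $G$ (including vertices as paths of length $0$).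
   Context: A Bratteli diagram $(E,d_E)$ consists of a graph $E=(E^0,E^1,r_E,s_E)$ and $d_E\colon E^0\to\mathbb{N}$ such that $E$ has no sinks, $E^0=\bigsqcup_{n\ge1}W_n$ (levels) with each $W_n$ finite, each edge goes from some $W_n$ to $W_{n+1}$, and $d_E(v)\ge\sum_{e\in r_E^{-1}(v)}d_E(s_E(e))$. With $E^*$ the finite paths and $VE^*W$ the paths from set $V$ to set $W$ ($vE^*w$ for single vertices): $(E,d_E)$ is $\mathsf{M}_k$-separated if (1) $W_n=H_n\sqcup\{y_n\}$; (2) $H_nE^*y_{n+1}=\emptyset$; (3) $d_E(y_n)=k$; (4) $|y_nE^*y_{n+1}|=1$; (5) $y_nE^*H_{n+1}\ne\emptyset$, for all $n$; properly $\mathsf{M}_k$-separated if moreover (6) $d_E(v)>\sum_{e\in r_E^{-1}(v)}d_E(s_E(e))$ for all $n$ and $v\in H_n$. *)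

theory Defs
  imports Main
begin

text \<open>A finite path is either a vertex (length 0) or a nonempty list of edges
  e_1 ... e_m with s(e_i) = r(e_(i+1)) (so r(path) = r(e_1), s(path) = s(e_m)).\<close>

datatype ('v, 'e) fpath = Vtx 'v | Edges "'e list"

definition fpaths :: "'v set \<Rightarrow> 'e set \<Rightarrow> ('e \<Rightarrow> 'v) \<Rightarrow> ('e \<Rightarrow> 'v) \<Rightarrow> ('v, 'e) fpath set" where
  "fpaths V0 E1 s r =
     Vtx ` V0 \<union>
     {Edges es | es. es \<noteq> [] \<and> set es \<subseteq> E1 \<and>
        (\<forall>i. Suc i < length es \<longrightarrow> s (es ! i) = r (es ! Suc i))}"

fun path_src :: "('e \<Rightarrow> 'v) \<Rightarrow> ('v, 'e) fpath \<Rightarrow> 'v" where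
  "path_src s (Vtx v) = v"
| "path_src s (Edges es) = s (last es)"

fun path_rng :: "('e \<Rightarrow> 'v) \<Rightarrow> ('v, 'e) fpath \<Rightarrow> 'v" where
  "path_rng r (Vtx v) = v"
| "path_rng r (Edges es) = r (hd es)"

definition paths_from_to :: "'v set \<Rightarrow> 'e set \<Rightarrow> ('e \<Rightarrow> 'v) \<Rightarrow> ('e \<Rightarrow> 'v) \<Rightarrow> 'v \<Rightarrow> 'v \<Rightarrow> ('v, 'e) fpath set" where
  "paths_from_to V0 E1 s r v w = {\<alpha> \<in> fpaths V0 E1 s r. path_src s \<alpha> = v \<and> path_rng r \<alpha> = w}"

text \<open>Levels are W n for n \<ge> 1 (W 0 is irrelevant).\<close>
definition bratteli_diagram ::
  "'v set \<Rightarrow> 'e set \<Rightarrow> ('e \<Rightarrow> 'v) \<Rightarrow> ('e \<Rightarrow> 'v) \<Rightarrow> ('v \<Rightarrow> nat) \<Rightarrow> (nat \<Rightarrow> 'v set) \<Rightarrow> bool" where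
  "bratteli_diagram V0 E1 s r d W \<longleftrightarrow>
     (\<forall>e\<in>E1. s e \<in> V0 \<and> r e \<in> V0) \<and>
     (\<forall>v\<in>V0. \<exists>e\<in>E1. s e = v) \<and>
     V0 = (\<Union>n\<in>{1..}. W n) \<and>
     (\<forall>n m. 1 \<le> n \<longrightarrow> 1 \<le> m \<longrightarrow> n \<noteq> m \<longrightarrow> W n \<inter> W m = {}) \<and>
     (\<forall>n\<ge>1. finite (W n)) \<and>
     (\<forall>e\<in>E1. \<exists>n\<ge>1. s e \<in> W n \<and> r e \<in> W (Suc n)) \<and>
     (\<forall>v\<in>V0. finite {e\<in>E1. r e = v}) \<and>
     (\<forall>v\<in>V0. (\<Sum>e\<in>{e\<in>E1. r e = v}. d (s e)) \<le> d v)"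

definition Mk_separated ::
  "'v set \<Rightarrow> 'e set \<Rightarrow> ('e \<Rightarrow> 'v) \<Rightarrow> ('e \<Rightarrow> 'v) \<Rightarrow> ('v \<Rightarrow> nat) \<Rightarrow> (nat \<Rightarrow> 'v set)
    \<Rightarrow> nat \<Rightarrow> (nat \<Rightarrow> 'v set) \<Rightarrow> (nat \<Rightarrow> 'v) \<Rightarrow> bool" where
  "Mk_separated V0 E1 s r d W k H y \<longleftrightarrow>
     bratteli_diagram V0 E1 s r d W \<and>
     (\<forall>n\<ge>1.
        W n = H n \<union> {y n} \<and> y n \<notin> H n \<and>
        (\<forall>v\<in>H n. paths_from_to V0 E1 s r v (y (Suc n)) = {}) \<and>
        d (y n) = k \<and>
        card (paths_from_to V0 E1 s r (y n) (y (Suc n))) = 1 \<and>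
        (\<exists>w\<in>H (Suc n). paths_from_to V0 E1 s r (y n) w \<noteq> {}))"

definition properly_Mk_separated ::
  "'v set \<Rightarrow> 'e set \<Rightarrow> ('e \<Rightarrow> 'v) \<Rightarrow> ('e \<Rightarrow> 'v) \<Rightarrow> ('v \<Rightarrow> nat) \<Rightarrow> (nat \<Rightarrow> 'v set)
    \<Rightarrow> nat \<Rightarrow> (nat \<Rightarrow> 'v set) \<Rightarrow> (nat \<Rightarrow> 'v) \<Rightarrow> bool" where
  "properly_Mk_separated V0 E1 s r d W k H y \<longleftrightarrow>
     Mk_separated V0 E1 s r d W k H y \<and>
     (\<forall>n\<ge>1. \<forall>v\<in>H n. (\<Sum>e\<in>{e\<in>E1. r e = v}. d (s e)) < d v)"

datatype 'v gvert = GV 'v | Zv nat | Xv 'v nat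
datatype ('v, 'e) gedge = GE 'e | Ed nat | Fe 'v nat | Ge 'v nat

definition Hall :: "(nat \<Rightarrow> 'v set) \<Rightarrow> 'v set" where
  "Hall H = (\<Union>n\<in>{1..}. H n)"

definition delta :: "'e set \<Rightarrow> ('e \<Rightarrow> 'v) \<Rightarrow> ('e \<Rightarrow> 'v) \<Rightarrow> ('v \<Rightarrow> nat) \<Rightarrow> 'v \<Rightarrow> nat" where
  "delta E1 s r d v = d v - (\<Sum>e\<in>{e\<in>E1. r e = v}. d (s e)) - 1"

definition G0 :: "'v set \<Rightarrow> 'e set \<Rightarrow> ('e \<Rightarrow> 'v) \<Rightarrow> ('e \<Rightarrow> 'v) \<Rightarrow> ('v \<Rightarrow> nat)
    \<Rightarrow> nat \<Rightarrow> (nat \<Rightarrow> 'v set) \<Rightarrow> (nat \<Rightarrow> 'v) \<Rightarrow> 'v gvert set" where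
  "G0 V0 E1 s r d k H y =
     GV ` Hall H \<union> Zv ` {1..k} \<union>
     {Xv v i | v i. v \<in> Hall H \<and> 1 \<le> i \<and> i \<le> delta E1 s r d v}"

text \<open>m(v) = |y_(n-1) E* v| for v in H_n, n \<ge> 2, and m(v) = 0 for v in H_1.\<close>
definition G1 :: "'v set \<Rightarrow> 'e set \<Rightarrow> ('e \<Rightarrow> 'v) \<Rightarrow> ('e \<Rightarrow> 'v) \<Rightarrow> ('v \<Rightarrow> nat)
    \<Rightarrow> nat \<Rightarrow> (nat \<Rightarrow> 'v set) \<Rightarrow> (nat \<Rightarrow> 'v) \<Rightarrow> ('v, 'e) gedge set" where
  "G1 V0 E1 s r d k H y =
     GE ` {e\<in>E1. s e \<in> Hall H} \<union> Ed ` {1..k - 1} \<union>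
     {Fe v i | v i n. 2 \<le> n \<and> v \<in> H n \<and> 1 \<le> i \<and>
                     i \<le> card (paths_from_to V0 E1 s r (y (n - 1)) v)} \<union>
     {Ge v i | v i. v \<in> Hall H \<and> 1 \<le> i \<and> i \<le> delta E1 s r d v}"

fun sG :: "('e \<Rightarrow> 'v) \<Rightarrow> nat \<Rightarrow> ('v, 'e) gedge \<Rightarrow> 'v gvert" where
  "sG s k (GE e) = GV (s e)"
| "sG s k (Ed i) = Zv i"
| "sG s k (Fe v i) = Zv k"
| "sG s k (Ge v i) = Xv v i"

fun rG :: "('e \<Rightarrow> 'v) \<Rightarrow> nat \<Rightarrow> ('v, 'e) gedge \<Rightarrow> 'v gvert" where
  "rG r k (GE e) = GV (r e)"
| "rG r k (Ed i) = Zv k"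
| "rG r k (Fe v i) = GV v"
| "rG r k (Ge v i) = GV v"

end

theory Submission
  imports Defs
begin

text \<open>
  Classify the paths of G with range u by the edge through which they enter u: their number P(u) satisfies
  P(u) = 1 + \<Sum> P(s e) over the edges e of G into u. The vertices x_i^v and z_j (j < k) are
  sources, so P = 1 there and P(z_k) = k. For v \<in> H_n this gives
  P(v) = 1 + \<Sum> P(s e) (e an edge of E from H_(n-1) to v) + m(v) k + \<delta>(v).
  In E the edges into v come from H_(n-1) or from y_(n-1); there are exactly m(v) of the latter
  and d(y_(n-1)) = k. By induction on n, P(v) = 1 + \<Sum> d(s e) (e \<in> r^-1(v)) + \<delta>(v) = d(v).
\<close>

lemma successively_iff_nth:
  "successively P xs \<longleftrightarrow> (\<forall>i. Suc i < length xs \<longrightarrow> P (xs ! i) (xs ! Suc i))"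
proof (induction xs)
  case (Cons x xs)
  then show ?case
    by (cases xs) (auto simp: successively_Cons nth_Cons split: nat.splits)
qed simp

definition chains_to :: "'e set \<Rightarrow> ('e \<Rightarrow> 'v) \<Rightarrow> ('e \<Rightarrow> 'v) \<Rightarrow> 'v \<Rightarrow> 'e list set" where
  "chains_to E1 s r u =
     {es. es \<noteq> [] \<and> set es \<subseteq> E1 \<and> successively (\<lambda>e e'. s e = r e') es \<and> r (hd es) = u}"

lemma fpaths_with_range:
  "{\<alpha> \<in> fpaths V0 E1 s r. path_rng r \<alpha> = u} = Vtx ` ({u} \<inter> V0) \<union> Edges ` chains_to E1 s r u"
  by (auto simp: fpaths_def chains_to_def successively_iff_nth)

lemma card_fpaths_with_range:
  assumes "u \<in> V0" "finite (chains_to E1 s r u)"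
  shows "card {\<alpha> \<in> fpaths V0 E1 s r. path_rng r \<alpha> = u} = Suc (card (chains_to E1 s r u))"
  unfolding fpaths_with_range using assms
  by (subst card_Un_disjoint) (auto simp: card_image inj_on_def)

lemma chains_to_unfold:
  "chains_to E1 s r u = (\<Union>e\<in>{e\<in>E1. r e = u}. (#) e ` insert [] (chains_to E1 s r (s e)))"
proof (intro equalityI subsetI)
  fix es assume "es \<in> chains_to E1 s r u"
  then obtain e es' where "es = e # es'" "e \<in> E1" "r e = u" "es' = [] \<or> es' \<in> chains_to E1 s r (s e)"
    by (cases es) (auto simp: chains_to_def successively_Cons)
  then show "es \<in> (\<Union>e\<in>{e\<in>E1. r e = u}. (#) e ` insert [] (chains_to E1 s r (s e)))"
    by auto
qed (auto simp: chains_to_def successively_Cons)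

lemma chains_to_no_in_edges: "{e\<in>E1. r e = u} = {} \<Longrightarrow> chains_to E1 s r u = {}"
  by (subst chains_to_unfold) simp

lemma finite_chains_to:
  assumes "finite {e\<in>E1. r e = u}" "\<And>e. e \<in> E1 \<Longrightarrow> r e = u \<Longrightarrow> finite (chains_to E1 s r (s e))"
  shows "finite (chains_to E1 s r u)"
  using assms by (subst chains_to_unfold) auto

lemma card_chains_to:
  assumes "finite {e\<in>E1. r e = u}" "\<And>e. e \<in> E1 \<Longrightarrow> r e = u \<Longrightarrow> finite (chains_to E1 s r (s e))"
  shows "card (chains_to E1 s r u) = (\<Sum>e\<in>{e\<in>E1. r e = u}. Suc (card (chains_to E1 s r (s e))))"
proof -
  have "[] \<notin> chains_to E1 s r v" for v
    by (simp add: chains_to_def)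
  then have "card ((#) e ` insert [] (chains_to E1 s r (s e))) = Suc (card (chains_to E1 s r (s e)))"
    if "e \<in> E1" "r e = u" for e
    using assms(2)[OF that] by (auto simp: card_image card_insert_if)
  then show ?thesis
    using assms by (subst chains_to_unfold, subst card_UN_disjoint) (auto intro!: sum.cong)
qed

lemma rG_neq_Xv: "rG r k g \<noteq> Xv v i"
  by (cases g) simp_all

lemma rG_eq_Zv: "rG r k g = Zv j \<Longrightarrow> j = k"
  by (cases g) simp_all

locale bratteli =
  fixes V0 :: "'v set" and E1 :: "'e set" and s r :: "'e \<Rightarrow> 'v"
    and d :: "'v \<Rightarrow> nat" and W :: "nat \<Rightarrow> 'v set"
  assumes diagram: "bratteli_diagram V0 E1 s r d W"
begin

lemma level_unique: "x \<in> W a \<Longrightarrow> x \<in> W b \<Longrightarrow> 1 \<le> a \<Longrightarrow> 1 \<le> b \<Longrightarrow> a = b"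
  using diagram unfolding bratteli_diagram_def by blast

lemma level_subset: "1 \<le> n \<Longrightarrow> W n \<subseteq> V0"
  using diagram unfolding bratteli_diagram_def by blast

lemma finite_in_edges: "v \<in> V0 \<Longrightarrow> finite {e\<in>E1. r e = v}"
  using diagram unfolding bratteli_diagram_def by blast

lemma edge_source_level:
  assumes "e \<in> E1" "r e \<in> W n" "1 \<le> n"
  shows "2 \<le> n \<and> s e \<in> W (n - 1)"
proof -
  have "\<forall>e\<in>E1. \<exists>n\<ge>1. s e \<in> W n \<and> r e \<in> W (Suc n)"
    using diagram by (simp add: bratteli_diagram_def)
  then obtain m where "1 \<le> m" "s e \<in> W m" "r e \<in> W (Suc m)"
    using assms(1) by blast
  moreover from this have "Suc m = n"
    using level_unique[of "r e" "Suc m" n] assms by simp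
  ultimately show ?thesis by auto
qed

lemma chain_length:
  "es \<in> chains_to E1 s r v \<Longrightarrow> v \<in> W a \<Longrightarrow> 1 \<le> a \<Longrightarrow> s (last es) \<in> W b \<Longrightarrow> 1 \<le> b
    \<Longrightarrow> a = b + length es"
proof (induction es arbitrary: v a)
  case (Cons e es)
  then have e: "e \<in> E1" "r e = v" and "2 \<le> a" "s e \<in> W (a - 1)"
    using edge_source_level[of e a] by (auto simp: chains_to_def)
  show ?case
  proof (cases "es = []")
    case True
    then show ?thesis using level_unique[of "s e" "a - 1" b] Cons.prems \<open>2 \<le> a\<close> \<open>s e \<in> W (a - 1)\<close>
      by auto
  next
    case False
    then have "es \<in> chains_to E1 s r (s e)"
      using Cons.prems(1) by (auto simp: chains_to_def successively_Cons)
    then show ?thesis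
      using Cons.IH[of "s e" "a - 1"] Cons.prems False \<open>2 \<le> a\<close> \<open>s e \<in> W (a - 1)\<close> by auto
  qed
qed (simp add: chains_to_def)

lemma card_paths_from_previous_level:
  assumes "2 \<le> n" "v \<in> W n" "w \<in> W (n - 1)"
  shows "card (paths_from_to V0 E1 s r w v) = card {e\<in>E1. r e = v \<and> s e = w}"
proof -
  have "paths_from_to V0 E1 s r w v = (\<lambda>e. Edges [e]) ` {e\<in>E1. r e = v \<and> s e = w}"
  proof (intro equalityI subsetI)
    fix \<alpha> assume \<alpha>: "\<alpha> \<in> paths_from_to V0 E1 s r w v"
    show "\<alpha> \<in> (\<lambda>e. Edges [e]) ` {e\<in>E1. r e = v \<and> s e = w}"
    proof (cases \<alpha>)
      case (Vtx u)
      then have "v = w" using \<alpha> by (auto simp: paths_from_to_def)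
      then have "n = n - 1" using level_unique[of v n "n - 1"] assms by auto
      with assms(1) show ?thesis by simp
    next
      case (Edges es)
      then have es: "es \<in> chains_to E1 s r v" and last: "s (last es) = w"
        using \<alpha> by (auto simp: paths_from_to_def fpaths_def chains_to_def successively_iff_nth)
      then have "n = (n - 1) + length es"
        using chain_length[OF es] assms by simp
      with es last assms(1) show ?thesis
        using Edges by (cases es) (auto simp: chains_to_def)
    qed
  qed (auto simp: paths_from_to_def fpaths_def)
  then show ?thesis by (simp add: card_image inj_on_def)
qed

end

locale Mk_separated_diagram =
  fixes V0 :: "'v set" and E1 :: "'e set" and s r :: "'e \<Rightarrow> 'v"
    and d :: "'v \<Rightarrow> nat" and W :: "nat \<Rightarrow> 'v set" and k :: nat
    and H :: "nat \<Rightarrow> 'v set" and y :: "nat \<Rightarrow> 'v"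
  assumes separated: "Mk_separated V0 E1 s r d W k H y"

sublocale Mk_separated_diagram \<subseteq> bratteli
  using separated by unfold_locales (simp add: Mk_separated_def)

context Mk_separated_diagram
begin

lemma level_eq: "1 \<le> n \<Longrightarrow> W n = insert (y n) (H n)"
  using separated by (auto simp: Mk_separated_def)

lemma y_notin_H: "1 \<le> n \<Longrightarrow> y n \<notin> H n"
  using separated by (simp add: Mk_separated_def)

lemma d_y: "1 \<le> n \<Longrightarrow> d (y n) = k"
  using separated by (simp add: Mk_separated_def)

lemma H_level_unique: "v \<in> H a \<Longrightarrow> v \<in> H b \<Longrightarrow> 1 \<le> a \<Longrightarrow> 1 \<le> b \<Longrightarrow> a = b"
  using level_unique level_eq by blast

lemma y_notin_Hall:
  assumes "1 \<le> n"
  shows "y n \<notin> Hall H"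
proof
  assume "y n \<in> Hall H"
  then obtain m where "1 \<le> m" "y n \<in> H m"
    by (auto simp: Hall_def)
  moreover from this have "m = n"
    using level_unique[of "y n" m n] level_eq assms by auto
  ultimately show False
    using y_notin_H assms by simp
qed

definition ymult :: "nat \<Rightarrow> 'v \<Rightarrow> nat" where
  "ymult n v = (if 2 \<le> n then card (paths_from_to V0 E1 s r (y (n - 1)) v) else 0)"

lemma sum_in_edges_split:
  assumes n: "1 \<le> n" and v: "v \<in> H n"
  shows "(\<Sum>e\<in>{e\<in>E1. r e = v}. d (s e)) =
           (\<Sum>e\<in>{e\<in>E1. s e \<in> Hall H \<and> r e = v}. d (s e)) + ymult n v * k"
proof (cases "2 \<le> n")
  case True
  define A where "A = {e\<in>E1. s e \<in> Hall H \<and> r e = v}"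
  define B where "B = {e\<in>E1. r e = v \<and> s e = y (n - 1)}"
  have n1: "1 \<le> n - 1"
    using True by simp
  have vW: "v \<in> W n"
    using level_eq[OF n] v by simp
  have "s e \<in> H (n - 1) \<or> s e = y (n - 1)" if "e \<in> E1" "r e = v" for e
    using edge_source_level[of e n] that vW n level_eq[OF n1] by auto
  then have "s e \<in> Hall H \<or> s e = y (n - 1)" if "e \<in> E1" "r e = v" for e
    using that n1 unfolding Hall_def by blast
  then have in_edges: "{e\<in>E1. r e = v} = A \<union> B"
    unfolding A_def B_def by auto
  have "finite {e\<in>E1. r e = v}"
    using finite_in_edges subsetD[OF level_subset[OF n] vW] .
  then have "finite A" "finite B"
    unfolding in_edges by auto
  moreover have "A \<inter> B = {}"
    using y_notin_Hall[OF n1] unfolding A_def B_def by auto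
  moreover have "card B = ymult n v"
    using card_paths_from_previous_level[OF True vW] level_eq[OF n1] True
    unfolding ymult_def B_def by (simp add: conj_commute)
  moreover have "(\<Sum>e\<in>B. d (s e)) = card B * k"
    using d_y[OF n1] unfolding B_def by simp
  ultimately show ?thesis
    unfolding in_edges A_def[symmetric] by (simp add: sum.union_disjoint)
next
  case False
  have none: "{e\<in>E1. r e = v} = {}"
    using edge_source_level[of _ n] False n level_eq[OF n] v by auto
  then have none_H: "{e\<in>E1. s e \<in> Hall H \<and> r e = v} = {}"
    by blast
  have "ymult n v = 0"
    using False by (simp add: ymult_def)
  then show ?thesis
    unfolding none none_H by simp
qed

abbreviation G_edges :: "('v, 'e) gedge set" where
  "G_edges \<equiv> G1 V0 E1 s r d k H y"

abbreviation G_chains_to :: "'v gvert \<Rightarrow> ('v, 'e) gedge list set" where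
  "G_chains_to \<equiv> chains_to G_edges (sG s k) (rG r k)"

lemma G_chains_to_Xv: "G_chains_to (Xv v i) = {}"
  by (rule chains_to_no_in_edges) (simp add: rG_neq_Xv)

lemma G_in_edges_Zv: "{g \<in> G_edges. rG r k g = Zv k} = Ed ` {1..k - 1}"
  by (auto simp: G1_def)

lemma G_chains_to_Zv: "j \<noteq> k \<Longrightarrow> G_chains_to (Zv j) = {}"
  by (rule chains_to_no_in_edges) (auto dest: rG_eq_Zv)

lemma
  shows finite_G_chains_to_Zv: "finite (G_chains_to (Zv k))"
    and card_G_chains_to_Zv: "card (G_chains_to (Zv k)) = k - 1"
proof -
  have sources: "G_chains_to (sG s k g) = {}" if "g \<in> G_edges" "rG r k g = Zv k" for g
  proof -
    have "g \<in> Ed ` {1..k - 1}"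
      using that unfolding G_in_edges_Zv[symmetric] by blast
    then obtain i where "g = Ed i" "i \<noteq> k"
      by fastforce
    then show ?thesis
      using G_chains_to_Zv[of i] by simp
  qed
  have in_edges_finite: "finite {g \<in> G_edges. rG r k g = Zv k}"
    unfolding G_in_edges_Zv by simp
  show "finite (G_chains_to (Zv k))"
    by (rule finite_chains_to[OF in_edges_finite]) (simp add: sources)
  have "card (G_chains_to (Zv k)) =
          (\<Sum>g\<in>{g \<in> G_edges. rG r k g = Zv k}. Suc (card (G_chains_to (sG s k g))))"
    by (rule card_chains_to[OF in_edges_finite]) (simp add: sources)
  also have "\<dots> = (\<Sum>g\<in>{g \<in> G_edges. rG r k g = Zv k}. 1)"
    by (rule sum.cong) (simp_all add: sources)
  also have "\<dots> = k - 1"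
    by (simp add: G_in_edges_Zv card_image inj_on_def)
  finally show "card (G_chains_to (Zv k)) = k - 1" .
qed

lemma G_in_edges_GV:
  assumes "1 \<le> n" "v \<in> H n"
  shows "{g \<in> G_edges. rG r k g = GV v} =
           GE ` {e\<in>E1. s e \<in> Hall H \<and> r e = v} \<union> Fe v ` {1..ymult n v} \<union> Ge v ` {1..delta E1 s r d v}"
proof -
  have Fe: "Fe v i \<in> G_edges \<longleftrightarrow> i \<in> {1..ymult n v}" for i
  proof
    assume "Fe v i \<in> G_edges"
    then obtain n' where "2 \<le> n'" "v \<in> H n'"
        "i \<in> {1..card (paths_from_to V0 E1 s r (y (n' - 1)) v)}"
      by (auto simp: G1_def)
    moreover from this have "n' = n"
      using H_level_unique[of v n' n] assms by simp
    ultimately show "i \<in> {1..ymult n v}"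
      by (simp add: ymult_def)
  next
    assume "i \<in> {1..ymult n v}"
    then show "Fe v i \<in> G_edges"
      using assms by (auto simp: G1_def ymult_def split: if_splits)
  qed
  have "v \<in> Hall H"
    using assms by (auto simp: Hall_def)
  show ?thesis
  proof (intro equalityI subsetI)
    fix g assume "g \<in> {g \<in> G_edges. rG r k g = GV v}"
    then show "g \<in> GE ` {e\<in>E1. s e \<in> Hall H \<and> r e = v} \<union> Fe v ` {1..ymult n v} \<union> Ge v ` {1..delta E1 s r d v}"
      using Fe by (cases g) (auto simp: G1_def)
  next
    fix g assume "g \<in> GE ` {e\<in>E1. s e \<in> Hall H \<and> r e = v} \<union> Fe v ` {1..ymult n v} \<union> Ge v ` {1..delta E1 s r d v}"
    then consider "g \<in> GE ` {e\<in>E1. s e \<in> Hall H \<and> r e = v}" | i where "g = Fe v i" "i \<in> {1..ymult n v}"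
      | "g \<in> Ge v ` {1..delta E1 s r d v}"
      by blast
    then show "g \<in> {g \<in> G_edges. rG r k g = GV v}"
    proof cases
      case 2
      then show ?thesis using Fe by simp
    qed (use \<open>v \<in> Hall H\<close> in \<open>auto simp: G1_def\<close>)
  qed
qed

lemma card_G_chains_to_GV_recurrence:
  assumes k: "1 \<le> k" and v: "1 \<le> n" "v \<in> H n"
    and sources: "\<And>e. e \<in> E1 \<Longrightarrow> s e \<in> Hall H \<Longrightarrow> r e = v \<Longrightarrow>
      finite (G_chains_to (GV (s e))) \<and> Suc (card (G_chains_to (GV (s e)))) = d (s e)"
  shows "finite (G_chains_to (GV v)) \<and>
    card (G_chains_to (GV v)) =
      (\<Sum>e\<in>{e\<in>E1. s e \<in> Hall H \<and> r e = v}. d (s e)) + ymult n v * k + delta E1 s r d v"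
proof -
  define A where "A = {e\<in>E1. s e \<in> Hall H \<and> r e = v}"
  define m where "m = ymult n v"
  define \<delta> where "\<delta> = delta E1 s r d v"
  let ?N = "\<lambda>g. Suc (card (G_chains_to (sG s k g)))"
  have in_edges: "{g \<in> G_edges. rG r k g = GV v} = GE ` A \<union> Fe v ` {1..m} \<union> Ge v ` {1..\<delta>}"
    using G_in_edges_GV[OF v] unfolding A_def m_def \<delta>_def .
  have "v \<in> W n"
    using level_eq v by simp
  then have "finite {e\<in>E1. r e = v}"
    using finite_in_edges subsetD[OF level_subset[OF v(1)]] by blast
  then have "finite A"
    unfolding A_def by (rule rev_finite_subset) auto
  then have in_edges_finite: "finite {g \<in> G_edges. rG r k g = GV v}"
    unfolding in_edges by simp
  have sources_finite: "finite (G_chains_to (sG s k g))" if "g \<in> G_edges" "rG r k g = GV v" for g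
  proof -
    have "g \<in> GE ` A \<union> Fe v ` {1..m} \<union> Ge v ` {1..\<delta>}"
      using that unfolding in_edges[symmetric] by blast
    then show ?thesis
      using sources finite_G_chains_to_Zv by (auto simp: A_def G_chains_to_Xv)
  qed
  have "card (G_chains_to (GV v)) = (\<Sum>g\<in>GE ` A \<union> Fe v ` {1..m} \<union> Ge v ` {1..\<delta>}. ?N g)"
    unfolding in_edges[symmetric] by (rule card_chains_to[OF in_edges_finite sources_finite])
  also have "\<dots> = (\<Sum>g\<in>GE ` A. ?N g) + (\<Sum>g\<in>Fe v ` {1..m}. ?N g) + (\<Sum>g\<in>Ge v ` {1..\<delta>}. ?N g)"
    using \<open>finite A\<close> by (subst sum.union_disjoint; auto)+
  also have "(\<Sum>g\<in>GE ` A. ?N g) = (\<Sum>e\<in>A. d (s e))"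
    using sources by (simp add: sum.reindex inj_on_def A_def)
  also have "(\<Sum>g\<in>Fe v ` {1..m}. ?N g) = m * k"
    using card_G_chains_to_Zv k by (simp add: sum.reindex inj_on_def)
  also have "(\<Sum>g\<in>Ge v ` {1..\<delta>}. ?N g) = \<delta>"
    by (simp add: sum.reindex inj_on_def G_chains_to_Xv)
  finally show ?thesis
    using finite_chains_to[OF in_edges_finite sources_finite] unfolding A_def m_def \<delta>_def by simp
qed

end

locale properly_Mk_separated_diagram = Mk_separated_diagram +
  assumes proper: "1 \<le> n \<Longrightarrow> v \<in> H n \<Longrightarrow> (\<Sum>e\<in>{e\<in>E1. r e = v}. d (s e)) < d v"
begin

lemma card_G_chains_to_GV:
  assumes "1 \<le> k" "1 \<le> n" "v \<in> H n"
  shows "finite (G_chains_to (GV v)) \<and> Suc (card (G_chains_to (GV v))) = d v"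
  using assms(2,3)
proof (induction n arbitrary: v rule: less_induct)
  case (less n)
  have "finite (G_chains_to (GV (s e))) \<and> Suc (card (G_chains_to (GV (s e)))) = d (s e)"
    if e: "e \<in> E1" "s e \<in> Hall H" "r e = v" for e
  proof -
    obtain n' where n': "1 \<le> n'" "s e \<in> H n'"
      using e(2) by (auto simp: Hall_def)
    have "v \<in> W n"
      using level_eq less.prems by simp
    then have "2 \<le> n" "s e \<in> W (n - 1)"
      using edge_source_level[OF e(1)] e(3) less.prems(1) by auto
    moreover have "s e \<in> W n'"
      using level_eq[OF n'(1)] n'(2) by simp
    ultimately have "n' = n - 1"
      using level_unique[of "s e" n' "n - 1"] n'(1) by simp
    then show ?thesis
      using less.IH[of n' "s e"] n' \<open>2 \<le> n\<close> by simp
  qed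
  from card_G_chains_to_GV_recurrence[OF assms(1) less.prems this]
  have "finite (G_chains_to (GV v)) \<and>
    card (G_chains_to (GV v)) = (\<Sum>e\<in>{e\<in>E1. r e = v}. d (s e)) + delta E1 s r d v"
    unfolding sum_in_edges_split[OF less.prems] .
  moreover have "d v = Suc ((\<Sum>e\<in>{e\<in>E1. r e = v}. d (s e)) + delta E1 s r d v)"
    \<comment> \<open>properness makes the truncated subtraction in delta exact\<close>
    using proper[OF less.prems] by (simp add: delta_def)
  ultimately show ?case
    by simp
qed

end

theorem lemma5p5:
  fixes V0 :: "'v set" and E1 :: "'e set" and s r :: "'e \<Rightarrow> 'v"
    and d :: "'v \<Rightarrow> nat" and W H :: "nat \<Rightarrow> 'v set" and y :: "nat \<Rightarrow> 'v" and k :: nat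
  assumes "1 \<le> k"
    and "properly_Mk_separated V0 E1 s r d W k H y"
  shows "\<forall>v\<in>Hall H. d v =
           card {\<alpha> \<in> fpaths (G0 V0 E1 s r d k H y) (G1 V0 E1 s r d k H y) (sG s k) (rG r k).
                   path_rng (rG r k) \<alpha> = GV v}"
proof
  interpret properly_Mk_separated_diagram V0 E1 s r d W k H y
    using assms(2) unfolding properly_Mk_separated_def by unfold_locales blast+
  fix v assume v: "v \<in> Hall H"
  then obtain n where "1 \<le> n" "v \<in> H n"
    by (auto simp: Hall_def)
  then have "finite (G_chains_to (GV v)) \<and> Suc (card (G_chains_to (GV v))) = d v"
    by (rule card_G_chains_to_GV[OF assms(1)])
  moreover have "GV v \<in> G0 V0 E1 s r d k H y"
    using v by (simp add: G0_def)
  ultimately show "d v =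
      card {\<alpha> \<in> fpaths (G0 V0 E1 s r d k H y) (G1 V0 E1 s r d k H y) (sG s k) (rG r k).
              path_rng (rG r k) \<alpha> = GV v}"
    by (simp add: card_fpaths_with_range)
qed

end
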